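(* There exists a decreasing sequence $(T_k)_{k\in\mathbb{N}}$ of compact subsets of $\mathbb{R}^2$ such that: (i) $T_0$ is the closed unit disk $\{x:\|x\|\le1\}$; (ii) $T_{k+1}\subset\operatorname{int}T_k$ for every $k\in\mathbb{N}$; (iii) $\bigcap_{k\in\mathbb{N}}T_k$ is the closed disk $\{x:\|x\|\le r\}$ for some $r>0$; (iv) $\sum_{k=0}^{+\infty}\operatorname{Dist}(T_k,T_{k+1})=+\infty$.
   Context: $\operatorname{Dist}(S_1,S_2)=\max\{\sup_{x\in S_1}\operatorname{dist}(x,S_2),\sup_{x\in S_2}\operatorname{dist}(x,S_1)\}$ is the Hausdorff distance, with $\operatorname{dist}(x,S)=\inf_{y\in S}\|x-y\|$. *)

theory Defs
  imports "HOL-Analysis.Analysis"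
begin

definition Hdist :: "'a::metric_space set \<Rightarrow> 'a set \<Rightarrow> real" where
  "Hdist S1 S2 = max (SUP x\<in>S1. infdist x S2) (SUP x\<in>S2. infdist x S1)"

end

theory Submission
  imports Defs "HOL-Library.Discrete_Functions"
begin

text \<open>Around the disk of radius 1/2 we place countably many small satellite disks, which
  are discarded one at a time. The satellites with index in \<open>[2^n, 2^(n+1))\<close> form a row of
  \<open>2^n\<close> points at mutual distance \<open>gap n \<approx> 1/((n+1) 2^n)\<close> on a horizontal line slightly
  above the disk, so discarding satellite \<open>k\<close> moves the set by at least \<open>gap n / 2\<close> in the
  Hausdorff distance. Each row contributes about \<open>1/(n+1)\<close> to the series, which therefore
  diverges like the harmonic series, while the rows, the satellites and the core radii all
  shrink towards the disk of radius 1/2.\<close>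

definition with_satellites :: "real \<Rightarrow> real \<Rightarrow> (nat \<Rightarrow> 'a::real_normed_vector) \<Rightarrow> nat \<Rightarrow> 'a set"
  where "with_satellites a b p k = cball 0 a \<union> (\<Union>m\<in>{k..}. cball (p m) b)"

lemma cball_subset_cball_0:
  fixes c :: "'a::real_normed_vector"
  assumes "norm c + r \<le> s"
  shows "cball c r \<subseteq> cball 0 s"
proof
  fix x assume "x \<in> cball c r"
  then show "x \<in> cball 0 s"
    using assms dist_triangle[of 0 x c] by (simp add: dist_commute)
qed

lemma compact_with_satellites:
  fixes p :: "nat \<Rightarrow> 'a::euclidean_space"
  assumes "\<forall>\<^sub>F m in sequentially. norm (p m) + b \<le> a"
  shows "compact (with_satellites a b p k)"
proof -
  obtain N where N: "\<And>m. N \<le> m \<Longrightarrow> norm (p m) + b \<le> a"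
    using assms by (auto simp: eventually_sequentially)
  have "cball (p m) b \<subseteq> cball 0 a \<union> (\<Union>m\<in>{k..<N}. cball (p m) b)" if "k \<le> m" for m
  proof (cases "m < N")
    case False
    then show ?thesis using N[of m] cball_subset_cball_0[of "p m" b a] by auto
  qed (use that in auto)
  then have "with_satellites a b p k = cball 0 a \<union> (\<Union>m\<in>{k..<N}. cball (p m) b)"
    unfolding with_satellites_def by auto
  then show ?thesis by (simp add: compact_Un compact_UN)
qed

lemma with_satellites_subset_interior:
  assumes "a' < a" "b' < b" "k \<le> k'"
  shows "with_satellites a' b' p k' \<subseteq> interior (with_satellites a b p k)"
proof -
  define U where "U = ball 0 a \<union> (\<Union>m\<in>{k..}. ball (p m) b)"
  have "open U" by (simp add: U_def open_Un open_UN)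
  moreover have "U \<subseteq> with_satellites a b p k"
    unfolding U_def with_satellites_def using ball_subset_cball by blast
  moreover have "cball 0 a' \<subseteq> ball 0 a" "cball (p m) b' \<subseteq> ball (p m) b" for m
    using assms(1,2) by auto
  then have "with_satellites a' b' p k' \<subseteq> U"
    using assms(3) unfolding U_def with_satellites_def by fastforce
  ultimately show ?thesis by (meson interior_maximal order_trans)
qed

lemma with_satellites_subset_cball:
  assumes "a \<le> c" "\<And>m. k \<le> m \<Longrightarrow> norm (p m) + b \<le> c"
  shows "with_satellites a b p k \<subseteq> cball 0 c"
proof -
  have "cball (p m) b \<subseteq> cball 0 c" if "k \<le> m" for m
    using assms(2)[OF that] by (rule cball_subset_cball_0)
  moreover have "cball 0 a \<subseteq> cball 0 c" using assms(1) by auto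
  ultimately show ?thesis unfolding with_satellites_def by blast
qed

lemma infdist_with_satellites_ge:
  assumes "0 \<le> a" "a + d \<le> norm x" "\<And>m. k \<le> m \<Longrightarrow> b + d \<le> dist x (p m)"
  shows "d \<le> infdist x (with_satellites a b p k)"
proof -
  have "0 \<in> with_satellites a b p k"
    using assms(1) by (simp add: with_satellites_def)
  then have ne: "with_satellites a b p k \<noteq> {}" by blast
  have lb: "d \<le> dist x y" if "y \<in> with_satellites a b p k" for y
  proof -
    have "y \<in> cball 0 a \<or> (\<exists>m\<ge>k. y \<in> cball (p m) b)"
      using that by (simp only: with_satellites_def Un_iff UN_iff atLeast_iff Bex_def)
    then consider "y \<in> cball 0 a" | m where "k \<le> m" "y \<in> cball (p m) b"
      by blast
    then show ?thesis
    proof cases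
      case 1
      then have "norm y \<le> a" by simp
      moreover have "norm x - norm y \<le> dist x y"
        using norm_triangle_ineq2[of x y] by (simp add: dist_norm)
      ultimately show ?thesis using assms(2) by linarith
    next
      case 2
      then have "dist y (p m) \<le> b" by (simp add: dist_commute)
      moreover have "dist x (p m) \<le> dist x y + dist y (p m)" by (rule dist_triangle)
      ultimately show ?thesis using assms(3)[OF \<open>k \<le> m\<close>] by linarith
    qed
  qed
  show ?thesis
    unfolding infdist_notempty[OF ne] by (rule cINF_greatest[OF ne lb])
qed

lemma infdist_le_Hdist:
  assumes "bounded S" "T \<noteq> {}" "x \<in> S"
  shows "infdist x T \<le> Hdist S T"
proof -
  obtain t where "t \<in> T" using assms(2) by blast
  moreover obtain e where "\<And>y. y \<in> S \<Longrightarrow> dist t y \<le> e"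
    using assms(1) bounded_any_center by metis
  ultimately have "bdd_above ((\<lambda>y. infdist y T) ` S)"
    by (metis (no_types, lifting) bdd_aboveI2 dist_commute infdist_le order_trans)
  then have "infdist x T \<le> (SUP y\<in>S. infdist y T)"
    using assms(3) by (rule cSUP_upper2) simp
  then show ?thesis unfolding Hdist_def by simp
qed

lemma Inter_eq_cball_if_squeezed:
  fixes T :: "nat \<Rightarrow> 'a::real_normed_vector set"
  assumes "\<And>k. cball 0 r \<subseteq> T k" "\<And>e. 0 < e \<Longrightarrow> \<exists>k. T k \<subseteq> cball 0 (r + e)"
  shows "(\<Inter>k. T k) = cball 0 r"
proof
  show "(\<Inter>k. T k) \<subseteq> cball 0 r"
  proof
    fix x assume x: "x \<in> (\<Inter>k. T k)"
    have "norm x \<le> r + e" if "0 < e" for e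
      using assms(2)[OF that] x by auto
    then show "x \<in> cball 0 r" by (simp add: field_le_epsilon)
  qed
qed (use assms(1) in blast)

lemma suminf_ennreal_eq_infinity:
  fixes f g :: "nat \<Rightarrow> real"
  assumes "\<And>k. 0 \<le> f k" "\<not> summable f" "\<forall>\<^sub>F k in sequentially. f k \<le> g k"
  shows "(\<Sum>k. ennreal (g k)) = \<infinity>"
proof -
  obtain N where N: "\<And>k. N \<le> k \<Longrightarrow> f k \<le> g k"
    using assms(3) by (auto simp: eventually_sequentially)
  have "\<not> summable (\<lambda>k. max 0 (g k))"
  proof
    assume "summable (\<lambda>k. max 0 (g k))"
    moreover have "norm (f k) \<le> max 0 (g k)" if "N \<le> k" for k
      using assms(1)[of k] N[OF that] by simp
    ultimately have "summable f" by (rule summable_comparison_test')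
    with assms(2) show False ..
  qed
  then have "(\<Sum>k. ennreal (max 0 (g k))) = top"
    by (intro summable_iff_suminf_neq_top) auto
  then show ?thesis by (simp only: ennreal_max_0 infinity_ennreal_def)
qed

definition gap :: "nat \<Rightarrow> real"
  where "gap n = 1 / (20 * (real n + 1) * 2 ^ n)"

definition lift :: "nat \<Rightarrow> real"
  where "lift n = 1 / (5 * 2 ^ n)"

definition satellite :: "nat \<Rightarrow> real^2" where
  "satellite k = vector [real (k - 2 ^ floor_log k) * gap (floor_log k), 1/2 + lift (floor_log k)]"

definition core_radius :: "nat \<Rightarrow> real"
  where "core_radius k = 1/2 + 1 / (20 * real k)"

definition satellite_radius :: "nat \<Rightarrow> real"
  where "satellite_radius k = 1 / (40 * (real k + 1)^2)"

definition shrinking_disks :: "nat \<Rightarrow> (real^2) set" where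
  "shrinking_disks k = (if k = 0 then cball 0 1
     else with_satellites (core_radius k) (satellite_radius k) satellite k)"

lemma real_plus_one_le_two_power: "real n + 1 \<le> 2 ^ n"
  by (induction n) auto

lemma two_power_floor_log_le:
  assumes "1 \<le> k"
  shows "(2::real) ^ floor_log k \<le> real k"
  using of_nat_mono[where 'a=real, OF floor_log_exp2_le[of k]] assms by simp

lemma floor_log_plus_one_le:
  assumes "1 \<le> k"
  shows "real (floor_log k) + 1 \<le> real k"
  using real_plus_one_le_two_power[of "floor_log k"] two_power_floor_log_le[OF assms] by linarith

lemma gap_nonneg: "0 \<le> gap n"
  by (simp add: gap_def)

lemma two_power_mult_gap: "2 ^ n * gap n = 1 / (20 * (real n + 1))"
  by (simp add: gap_def)

lemma gap_antimono:
  assumes "n \<le> n'"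
  shows "gap n' \<le> gap n"
proof -
  have "20 * (real n + 1) * 2 ^ n \<le> 20 * (real n' + 1) * (2::real) ^ n'"
    using assms by (intro mult_mono power_increasing) auto
  then show ?thesis unfolding gap_def by (intro frac_le) auto
qed

lemma norm_satellite_le: "norm (satellite k) \<le> 1/2 + 1 / (4 * (real (floor_log k) + 1))"
proof -
  define n where "n = floor_log k"
  have "k - 2 ^ n \<le> 2 ^ n"
    using floor_log_exp2_gt[of k] unfolding n_def by linarith
  then have "real (k - 2 ^ n) \<le> real ((2::nat) ^ n)" by (rule of_nat_mono)
  then have "real (k - 2 ^ n) * gap n \<le> 2 ^ n * gap n"
    using gap_nonneg by (intro mult_right_mono) auto
  then have x: "real (k - 2 ^ n) * gap n \<le> 1 / (20 * (real n + 1))"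
    by (simp add: two_power_mult_gap)
  have y: "lift n \<le> 1 / (5 * (real n + 1))"
    unfolding lift_def using real_plus_one_le_two_power[of n] by (intro frac_le) auto
  have "norm (satellite k) \<le> \<bar>satellite k $ 1\<bar> + \<bar>satellite k $ 2\<bar>"
    using norm_le_l1_cart[of "satellite k"] by (simp add: sum_2)
  also have "\<dots> = real (k - 2 ^ n) * gap n + (1/2 + lift n)"
    by (simp add: satellite_def n_def gap_def lift_def)
  also have "\<dots> \<le> 1/2 + 1 / (4 * (real n + 1))"
    using x y by (simp add: field_simps)
  finally show ?thesis by (simp add: n_def)
qed

lemma norm_satellite_ge: "1/2 + lift (floor_log k) \<le> norm (satellite k)"
  using component_le_norm_cart[of "satellite k" 2] by (simp add: satellite_def lift_def)

text \<open>Satellites in one row are \<open>gap n\<close> apart horizontally; the rows themselves are more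
  than \<open>gap n\<close> apart vertically.\<close>
lemma dist_satellites_ge:
  assumes "1 \<le> k" "k < m"
  shows "gap (floor_log k) \<le> dist (satellite k) (satellite m)"
proof -
  define n where "n = floor_log k"
  define n' where "n' = floor_log m"
  have "n \<le> n'" unfolding n_def n'_def using assms by (simp add: floor_log_le_iff)
  then consider "n' = n" | "Suc n \<le> n'" by linarith
  then show ?thesis
  proof cases
    case 1
    have "2 ^ n \<le> k" using assms(1) floor_log_exp2_le[of k] by (simp add: n_def)
    then have "(satellite m - satellite k) $ 1 = (real m - real k) * gap n"
      using 1 assms(2) by (simp add: satellite_def n_def n'_def[symmetric] of_nat_diff left_diff_distrib)
    moreover have "1 * gap n \<le> (real m - real k) * gap n"
      using assms(2) gap_nonneg by (intro mult_right_mono) auto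
    ultimately have "gap n \<le> \<bar>(satellite m - satellite k) $ 1\<bar>" by simp
    then show ?thesis
      using component_le_norm_cart[of "satellite m - satellite k" 1]
      by (simp add: dist_norm norm_minus_commute n_def)
  next
    case 2
    have "lift n' \<le> lift (Suc n)"
      unfolding lift_def using 2 by (intro frac_le mult_left_mono power_increasing) auto
    moreover have "lift n - lift (Suc n) = 1 / (10 * 2 ^ n)"
      by (simp add: lift_def field_simps)
    moreover have "gap n \<le> 1 / (10 * 2 ^ n)"
      unfolding gap_def by (intro frac_le) auto
    moreover have "(satellite k - satellite m) $ 2 = lift n - lift n'"
      by (simp add: satellite_def n_def n'_def)
    ultimately have "gap n \<le> \<bar>(satellite k - satellite m) $ 2\<bar>" by simp
    then show ?thesis
      using component_le_norm_cart[of "satellite k - satellite m" 2] by (simp add: dist_norm n_def)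
  qed
qed

lemma satellite_radius_le:
  assumes "0 < k"
  shows "satellite_radius k \<le> 1 / (40 * real k)"
proof -
  have "real k \<le> (real k + 1)^2" by (simp add: power2_eq_square algebra_simps)
  then show ?thesis
    unfolding satellite_radius_def using assms by (intro frac_le) auto
qed

lemma shrinking_disks_subset_cball:
  assumes "1 \<le> k"
  shows "shrinking_disks k \<subseteq> cball 0 (1/2 + 3 / (10 * (real (floor_log k) + 1)))"
proof -
  define n where "n = floor_log k"
  have nk: "real n + 1 \<le> real k" using floor_log_plus_one_le[OF assms] by (simp add: n_def)
  have "1 / (20 * real k) \<le> 3 / (10 * (real n + 1))"
    using nk by (intro frac_le) auto
  then have "core_radius k \<le> 1/2 + 3 / (10 * (real n + 1))"
    unfolding core_radius_def by simp
  moreover have "norm (satellite m) + satellite_radius k \<le> 1/2 + 3 / (10 * (real n + 1))"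
    if "k \<le> m" for m
  proof -
    have "n \<le> floor_log m" using that by (simp add: n_def floor_log_le_iff)
    then have "1 / (4 * (real (floor_log m) + 1)) \<le> 1 / (4 * (real n + 1))"
      by (intro frac_le) auto
    then have "norm (satellite m) \<le> 1/2 + 1 / (4 * (real n + 1))"
      using norm_satellite_le[of m] by linarith
    moreover have "satellite_radius k \<le> 1 / (40 * (real n + 1))"
      using satellite_radius_le[of k] assms frac_le[of 1 1 "40 * (real n + 1)" "40 * real k"] nk
      by simp
    moreover have sum_le: "1 / (4 * x) + 1 / (40 * x) \<le> 3 / (10 * x)" if "0 \<le> x" for x :: real
    proof -
      have "11 / (40 * x) \<le> 12 / (40 * x)" using that by (intro divide_right_mono) auto
      then show ?thesis by simp
    qed
    ultimately show ?thesis using sum_le[of "real n + 1"] by linarith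
  qed
  ultimately show ?thesis
    using assms unfolding shrinking_disks_def n_def by (simp add: with_satellites_subset_cball)
qed

text \<open>From the row \<open>10 k\<close> on, the satellites lie in the core disk.\<close>
lemma compact_shrinking_disks: "compact (shrinking_disks k)"
proof (cases "k = 0")
  case False
  have "norm (satellite m) + satellite_radius k \<le> core_radius k" if "2 ^ (10 * k) \<le> m" for m
  proof -
    have "10 * k \<le> floor_log m"
      using floor_log_le_iff[OF that] by simp
    then have "1 / (4 * (real (floor_log m) + 1)) \<le> 1 / (40 * real k)"
      using False by (intro frac_le) auto
    then have "norm (satellite m) \<le> 1/2 + 1 / (40 * real k)"
      using norm_satellite_le[of m] by linarith
    moreover have "1 / (40 * real k) + 1 / (40 * real k) = 1 / (20 * real k)" by simp
    ultimately show ?thesis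
      using satellite_radius_le[of k] False unfolding core_radius_def by linarith
  qed
  then have "\<forall>\<^sub>F m in sequentially. norm (satellite m) + satellite_radius k \<le> core_radius k"
    unfolding eventually_sequentially by blast
  then show ?thesis
    using False by (simp add: shrinking_disks_def compact_with_satellites)
qed (simp add: shrinking_disks_def)

lemma shrinking_disks_subset_interior: "shrinking_disks (Suc k) \<subseteq> interior (shrinking_disks k)"
proof (cases "k = 0")
  case True
  have "shrinking_disks (Suc k) \<subseteq> cball 0 (4/5)"
    using shrinking_disks_subset_cball[of 1] True by simp
  also have "\<dots> \<subseteq> interior (shrinking_disks k)"
    using True by (auto simp: shrinking_disks_def)
  finally show ?thesis .
next
  case False
  have "core_radius (Suc k) < core_radius k"
    using False unfolding core_radius_def by (simp add: frac_less2)
  moreover have "satellite_radius (Suc k) < satellite_radius k"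
    unfolding satellite_radius_def by (intro divide_strict_left_mono) (auto simp: power_strict_mono)
  ultimately show ?thesis
    using False by (simp add: shrinking_disks_def with_satellites_subset_interior)
qed

lemma Inter_shrinking_disks: "(\<Inter>k. shrinking_disks k) = cball 0 (1/2)"
proof (rule Inter_eq_cball_if_squeezed)
  fix k
  have "cball 0 (1/2) \<subseteq> cball (0::real^2) (core_radius k)"
    by (rule cball_subset_cball_0) (simp add: core_radius_def)
  then show "cball 0 (1/2) \<subseteq> shrinking_disks k"
    by (auto simp: shrinking_disks_def with_satellites_def)
next
  fix e :: real assume "0 < e"
  obtain N :: nat where "3 / e < real N" using reals_Archimedean2 by blast
  then have "3 / (10 * (real N + 1)) < e"
    using \<open>0 < e\<close> by (simp add: field_simps)
  then have "shrinking_disks (2 ^ N) \<subseteq> cball 0 (1/2 + e)"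
    using shrinking_disks_subset_cball[of "2 ^ N"] by force
  then show "\<exists>k. shrinking_disks k \<subseteq> cball 0 (1/2 + e)" ..
qed

lemma core_radius_Suc_add_gap_le:
  assumes "1 \<le> k"
  shows "core_radius (Suc k) + gap (floor_log k) / 2 \<le> norm (satellite k)"
proof -
  define n where "n = floor_log k"
  have "(2::real) ^ n \<le> real (Suc k)"
    using two_power_floor_log_le[OF assms] unfolding n_def by linarith
  then have "1 / (20 * real (Suc k)) \<le> 1 / (20 * 2 ^ n)"
    by (rule frac_le[rotated 3, OF mult_left_mono]) auto
  then have "core_radius (Suc k) \<le> 1/2 + 1 / (20 * 2 ^ n)"
    unfolding core_radius_def by simp
  moreover have "gap n \<le> 1 / (20 * 2 ^ n)"
    unfolding gap_def by (intro frac_le) auto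
  moreover have "lift n = 4 * (1 / (20 * 2 ^ n))" by (simp add: lift_def)
  moreover have "0 \<le> 1 / (20 * (2::real) ^ n)" by simp
  ultimately show ?thesis
    using norm_satellite_ge[of k] unfolding n_def[symmetric] by linarith
qed

lemma satellite_radius_Suc_le_gap:
  assumes "1 \<le> k"
  shows "satellite_radius (Suc k) \<le> gap (floor_log k) / 2"
proof -
  define n where "n = floor_log k"
  have "(real n + 1) * 2 ^ n \<le> real k * real k"
    using floor_log_plus_one_le[OF assms] two_power_floor_log_le[OF assms]
    by (intro mult_mono) (auto simp: n_def)
  also have "\<dots> \<le> (real (Suc k) + 1)^2" by (simp add: power2_eq_square algebra_simps)
  finally have "40 * ((real n + 1) * 2 ^ n) \<le> 40 * (real (Suc k) + 1)^2" by simp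
  then have "satellite_radius (Suc k) \<le> 1 / (40 * ((real n + 1) * 2 ^ n))"
    unfolding satellite_radius_def by (intro frac_le) auto
  moreover have "1 / (40 * ((real n + 1) * 2 ^ n)) = gap n / 2"
    unfolding gap_def by (simp add: mult.assoc)
  ultimately show ?thesis unfolding n_def by linarith
qed

lemma satellite_in_shrinking_disks:
  assumes "1 \<le> k"
  shows "satellite k \<in> shrinking_disks k"
proof -
  have "satellite k \<in> cball (satellite k) (satellite_radius k)"
    by (simp add: satellite_radius_def)
  then have "satellite k \<in> with_satellites (core_radius k) (satellite_radius k) satellite k"
    unfolding with_satellites_def by (intro UnI2 UN_I[of k]) auto
  then show ?thesis
    using assms by (simp add: shrinking_disks_def)
qed

text \<open>The core has shrunk below the row of satellite \<open>k\<close>, and the remaining satellites are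
  too small to reach it.\<close>
lemma Hdist_shrinking_disks_ge:
  assumes "1 \<le> k"
  shows "gap (floor_log k) / 2 \<le> Hdist (shrinking_disks k) (shrinking_disks (Suc k))"
proof -
  have "satellite_radius (Suc k) + gap (floor_log k) / 2 \<le> dist (satellite k) (satellite m)"
    if "Suc k \<le> m" for m
    using satellite_radius_Suc_le_gap[OF assms] dist_satellites_ge[of k m] assms that by simp
  moreover have "0 \<le> core_radius (Suc k)" by (simp add: core_radius_def)
  ultimately have "gap (floor_log k) / 2 \<le> infdist (satellite k)
      (with_satellites (core_radius (Suc k)) (satellite_radius (Suc k)) satellite (Suc k))"
    using core_radius_Suc_add_gap_le[OF assms] by (intro infdist_with_satellites_ge)
  then have "gap (floor_log k) / 2 \<le> infdist (satellite k) (shrinking_disks (Suc k))"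
    by (simp add: shrinking_disks_def)
  also have "\<dots> \<le> Hdist (shrinking_disks k) (shrinking_disks (Suc k))"
  proof (rule infdist_le_Hdist)
    show "bounded (shrinking_disks k)"
      by (simp add: compact_imp_bounded compact_shrinking_disks)
    have "0 \<in> shrinking_disks (Suc k)"
      by (simp add: shrinking_disks_def with_satellites_def core_radius_def)
    then show "shrinking_disks (Suc k) \<noteq> {}" by blast
  qed (rule satellite_in_shrinking_disks[OF assms])
  finally show ?thesis .
qed

text \<open>By Cauchy condensation: row \<open>n\<close> contributes \<open>2^n gap n = 1/(20 (n + 1))\<close>.\<close>
lemma not_summable_gap_floor_log: "\<not> summable (\<lambda>k. gap (floor_log k))"
proof
  assume "summable (\<lambda>k. gap (floor_log k))"
  then have "summable (\<lambda>n. 2 ^ n * gap (floor_log (2 ^ n)))"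
    by (subst (asm) condensation_test) (auto intro!: gap_antimono floor_log_le_iff gap_nonneg)
  also have "(\<lambda>n. 2 ^ n * gap (floor_log (2 ^ n))) = (\<lambda>n. inverse (real (Suc n)) / 20)"
    by (simp only: floor_log_power two_power_mult_gap) (simp add: inverse_eq_divide algebra_simps)
  finally have "summable (\<lambda>n. inverse (real (Suc n)))" by simp
  then have "summable (\<lambda>n. inverse (real n))"
    using summable_Suc_iff[of "\<lambda>n. inverse (real n)"] by simp
  then show False using not_summable_harmonic by blast
qed

theorem lemma4p10:
  shows "\<exists>T :: nat \<Rightarrow> (real^2) set.
     decseq T \<and> (\<forall>k. compact (T k)) \<and>
     T 0 = cball 0 1 \<and>
     (\<forall>k. T (Suc k) \<subseteq> interior (T k)) \<and>
     (\<exists>r>0. (\<Inter>k. T k) = cball 0 r) \<and>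
     (\<Sum>k. ennreal (Hdist (T k) (T (Suc k)))) = \<infinity>"
proof (intro exI[of _ shrinking_disks] conjI allI)
  show "decseq shrinking_disks"
    unfolding decseq_Suc_iff using shrinking_disks_subset_interior interior_subset by blast
  show "compact (shrinking_disks k)" for k
    by (rule compact_shrinking_disks)
  show "shrinking_disks 0 = cball 0 1"
    by (simp add: shrinking_disks_def)
  show "shrinking_disks (Suc k) \<subseteq> interior (shrinking_disks k)" for k
    by (rule shrinking_disks_subset_interior)
  show "\<exists>r>0. (\<Inter>k. shrinking_disks k) = cball 0 r"
    using Inter_shrinking_disks by (intro exI[of _ "1/2"]) auto
  show "(\<Sum>k. ennreal (Hdist (shrinking_disks k) (shrinking_disks (Suc k)))) = \<infinity>"
  proof (rule suminf_ennreal_eq_infinity)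
    show "\<not> summable (\<lambda>k. gap (floor_log k) / 2)"
      using not_summable_gap_floor_log by simp
    show "\<forall>\<^sub>F k in sequentially. gap (floor_log k) / 2 \<le> Hdist (shrinking_disks k) (shrinking_disks (Suc k))"
      unfolding eventually_sequentially by (blast intro: Hdist_shrinking_disks_ge)
  qed (simp add: gap_nonneg)
qed

end
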